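(* Let $\mathcal{M}$, $\sigma_*$, $\sigma$, $\bar x$, $\delta$, $\phi$, $\mathcal{D}$ and $\bar\phi$ be as described in the context. Then $\bar\phi$ is well defined with values in $N^{\mathrm{red}}_{\mathcal{M}}(\bar x)$, it is locally symmetric in the sense that $\bar\phi(\sigma'x)=\bar\phi(x)$ for all $x\in\mathcal{D}$ and all $\sigma'\in\Sigma^n$ with $\sigma'\bar x=\bar x$, and it is a local equation of $\mathcal{M}$ around $\bar x$: for $x\in\mathcal{D}$ one has $\bar\phi(x)=0$ iff $x\in\mathcal{M}\cap B(\bar x,\delta)$, and the Jacobian of $\bar\phi$ at $\bar x$, as a linear map from $T_{\mathcal{M}}(\bar x)\oplus N^{\mathrm{red}}_{\mathcal{M}}(\bar x)$ to $N^{\mathrm{red}}_{\mathcal{M}}(\bar x)$, is onto.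
   Context: $\Sigma^n$ permutations of $\mathbb{N}_n$ acting by $(\sigma x)_i=x_{\sigma^{-1}(i)}$; $P(\sigma)$ orbit partition; $P(x)$ partition by equal coordinates; $\Delta(\sigma)=\{x:P(x)=P(\sigma)\}$; $\Delta(\sigma)^{\perp\perp}=\{x:x_i=x_j$ whenever $i,j$ lie in the same set of $P(\sigma)\}$ and $\Delta(\sigma)^\perp$ its orthogonal complement; $\mathbb{R}^n_\ge=\{x:x_1\ge\cdots\ge x_n\}$; $B(x,\delta)$ open ball. A set $S$ is locally symmetric if $S\cap\mathbb{R}^n_\ge\ne\emptyset$ and each $x\in S$ has $\delta>0$ with $\sigma(S\cap B(x,\delta))=S\cap B(x,\delta)$ for all $y\in S\cap B(x,\delta)$, all $\sigma$ with $\sigma y=y$ (strongly locally symmetric: $\sigma S=S$ for all $y\in S$, all $\sigma$ with $\sigma y=y$). $\mathcal{M}$ is a locally symmetric $C^2$ submanifold (connected, without boundary) of dimension $d$, with characteristic permutation $\sigma_*$ (i.e. $\mathcal{M}\cap B(y,\rho)\subset\Delta(\sigma_* )$ for some $y\in\mathcal{M}$, $\rho>0$); $\kappa_*=|\mathbb{N}_n\setminus\mathrm{supp}(\sigma_* )|$. For $x\in\mathbb{R}^n$, $x^F\in\mathbb{R}^{\kappa_*}$ collects the coordinates with indices in $\mathbb{N}_n\setminus\mathrm{supp}(\sigma_* )$ and $x^M\in\mathbb{R}^{n-\kappa_*}$ the others (in increasing index order), and $x^F\otimes x^M$ denotes the inverse reassembling. Fix $\bar x\in\mathcal{M}\cap\Delta(\sigma)$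 and $\delta>0$ such that: $B(\bar x,\delta)$ meets only strata $\Delta(\sigma')$ with $P(\sigma')$ refining $P(\sigma)$; $\mathcal{M}\cap B(\bar x,\delta)$ is strongly locally symmetric; and the orthogonal projection $\bar\pi_T$ onto $\bar x+T_{\mathcal{M}}(\bar x)$ restricted to $\mathcal{M}\cap B(\bar x,\delta)$ is a diffeomorphism onto its image. Let $\phi:(\bar x+T_{\mathcal{M}}(\bar x))\cap B(\bar x,\delta)\to N_{\mathcal{M}}(\bar x)$ be the $C^2$ map with $\mathcal{M}\cap B(\bar x,\delta)=\{x+\phi(x)\}$. Set $N^{\mathrm{red}}_{\mathcal{M}}(\bar x)=N_{\mathcal{M}}(\bar x)\cap\Delta(\sigma)^{\perp\perp}$, choose $\delta_1,\delta_2>0$ with $\mathcal{B}:=B(\bar x^F,\delta_1)\otimes B(\bar x^M,\delta_2)\subset B(\bar x,\delta)$, and $\mathcal{D}=(\bar x+T_{\mathcal{M}}(\bar x)\oplus N^{\mathrm{red}}_{\mathcal{M}}(\bar x))\cap\mathcal{B}$. Let $\bar\pi^{\mathrm{red}}_N$ be the orthogonal projection onto $\bar x+N^{\mathrm{red}}_{\mathcal{M}}(\bar x)$ and define $\bar\phi(x)=\bar x+\phi(\bar\pi_T(x))-\bar\pi^{\mathrm{red}}_N(x)$ for $x\in\mathcal{D}$. *)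

theory Defs
  imports "HOL-Analysis.Analysis" "HOL-Combinatorics.Permutations"
begin

text \<open>Points of R^n are vectors (real,'n) vec, the finite index type 'n (with its linear
order) playing the role of N_n = {1,...,n}.\<close>

definition pact :: "('n::finite \<Rightarrow> 'n) \<Rightarrow> (real,'n) vec \<Rightarrow> (real,'n) vec" where
  "pact \<sigma> x = (\<chi> i. x $ (inv \<sigma> i))"

definition same_orbit :: "('n \<Rightarrow> 'n) \<Rightarrow> 'n \<Rightarrow> 'n \<Rightarrow> bool" where
  "same_orbit \<sigma> i j \<longleftrightarrow> (\<exists>k. (\<sigma> ^^ k) i = j)"

text \<open>Stratum Delta(sigma) = {x. P(x) = P(sigma)}.\<close>
definition stratum :: "('n::finite \<Rightarrow> 'n) \<Rightarrow> ((real,'n) vec) set" where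
  "stratum \<sigma> = {x. \<forall>i j. x $ i = x $ j \<longleftrightarrow> same_orbit \<sigma> i j}"

text \<open>Delta(sigma)^perp-perp: vectors constant on each set of P(sigma).\<close>
definition stratum_span :: "('n::finite \<Rightarrow> 'n) \<Rightarrow> ((real,'n) vec) set" where
  "stratum_span \<sigma> = {x. \<forall>i j. same_orbit \<sigma> i j \<longrightarrow> x $ i = x $ j}"

definition refines :: "('n \<Rightarrow> 'n) \<Rightarrow> ('n \<Rightarrow> 'n) \<Rightarrow> bool" where
  "refines \<sigma>' \<sigma> \<longleftrightarrow> (\<forall>i j. same_orbit \<sigma>' i j \<longrightarrow> same_orbit \<sigma> i j)"

definition dec_cone :: "((real,'n::{finite,linorder}) vec) set" where
  "dec_cone = {x. \<forall>i j. i \<le> j \<longrightarrow> x $ j \<le> x $ i}"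

definition locally_symmetric :: "((real,'n::{finite,linorder}) vec) set \<Rightarrow> bool" where
  "locally_symmetric S \<longleftrightarrow> S \<inter> dec_cone \<noteq> {} \<and>
     (\<forall>x\<in>S. \<exists>\<delta>>0. \<forall>y\<in>S \<inter> ball x \<delta>. \<forall>\<sigma>. \<sigma> permutes UNIV \<and> pact \<sigma> y = y \<longrightarrow>
        pact \<sigma> ` (S \<inter> ball x \<delta>) = S \<inter> ball x \<delta>)"

definition strongly_locally_symmetric :: "((real,'n::{finite,linorder}) vec) set \<Rightarrow> bool" where
  "strongly_locally_symmetric S \<longleftrightarrow> S \<inter> dec_cone \<noteq> {} \<and>
     (\<forall>y\<in>S. \<forall>\<sigma>. \<sigma> permutes UNIV \<and> pact \<sigma> y = y \<longrightarrow> pact \<sigma> ` S = S)"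

text \<open>C^1 / C^2 maps on a set S (derivatives taken within S; for open S this is the
usual notion).\<close>
definition C1_on :: "'a::real_normed_vector set \<Rightarrow> ('a \<Rightarrow> 'b::real_normed_vector) \<Rightarrow> bool" where
  "C1_on S f \<longleftrightarrow> (\<exists>f'. (\<forall>x\<in>S. (f has_derivative blinfun_apply (f' x)) (at x within S))
                      \<and> continuous_on S f')"

definition C2_on :: "'a::real_normed_vector set \<Rightarrow> ('a \<Rightarrow> 'b::real_normed_vector) \<Rightarrow> bool" where
  "C2_on S f \<longleftrightarrow> (\<exists>f'. (\<forall>x\<in>S. (f has_derivative blinfun_apply (f' x)) (at x within S))
                      \<and> C1_on S f')"

definition C2_submanifold :: "((real,'n::finite) vec) set \<Rightarrow> nat \<Rightarrow> bool" where
  "C2_submanifold M d \<longleftrightarrow> (\<forall>p\<in>M. \<exists>U W (\<psi> :: (real,'n) vec \<Rightarrow> (real,'n) vec) L. open U \<and> p \<in> U \<and> open W \<and>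
      bij_betw \<psi> U W \<and> C2_on U \<psi> \<and> C2_on W (the_inv_into U \<psi>) \<and>
      subspace L \<and> dim L = d \<and> \<psi> ` (M \<inter> U) = L \<inter> W)"

definition tangent_space :: "((real,'n::finite) vec) set \<Rightarrow> (real,'n) vec \<Rightarrow> ((real,'n) vec) set" where
  "tangent_space M x = {v. \<exists>\<gamma> e. e > 0 \<and> \<gamma> 0 = x \<and> (\<forall>t\<in>{-e<..<e}. \<gamma> t \<in> M) \<and>
                                (\<gamma> has_vector_derivative v) (at 0)}"

definition normal_space :: "((real,'n::finite) vec) set \<Rightarrow> (real,'n) vec \<Rightarrow> ((real,'n) vec) set" where
  "normal_space M x = {w. \<forall>v\<in>tangent_space M x. w \<bullet> v = 0}"

definition characteristic_perm :: "((real,'n::finite) vec) set \<Rightarrow> ('n \<Rightarrow> 'n) \<Rightarrow> bool" where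
  "characteristic_perm M \<sigma> \<longleftrightarrow> \<sigma> permutes UNIV \<and>
     (\<exists>y\<in>M. \<exists>\<rho>>0. M \<inter> ball y \<rho> \<subseteq> stratum \<sigma>)"

definition aff :: "'a::real_vector \<Rightarrow> 'a set \<Rightarrow> 'a set" where
  "aff p V = {p + v | v. v \<in> V}"

definition orth_proj :: "'a::real_inner set \<Rightarrow> 'a \<Rightarrow> 'a" where
  "orth_proj A x = (THE p. p \<in> A \<and> (\<forall>a\<in>A. \<forall>b\<in>A. (x - p) \<bullet> (a - b) = 0))"

definition direct_sum :: "'a::real_vector set \<Rightarrow> 'a set \<Rightarrow> 'a set" where
  "direct_sum V W = {v + w | v w. v \<in> V \<and> w \<in> W}"

definition diffeo_onto_image :: "'a::real_normed_vector set \<Rightarrow> ('a \<Rightarrow> 'a) \<Rightarrow> bool" where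
  "diffeo_onto_image S f \<longleftrightarrow> inj_on f S \<and> C2_on S f \<and> C2_on (f ` S) (the_inv_into S f)"

end

theory Submission
  imports Defs
begin

text \<open>Every point of the reduced domain is \<open>xbar + t + n\<close> with \<open>t \<in> T\<close> and
  \<open>n \<in> Nred \<subseteq> T\<^sup>\<bottom>\<close>; the two orthogonal projections read off \<open>t\<close> and \<open>n\<close>, so
  \<open>\<phi>bar (xbar + t + n) = \<phi> (xbar + t) - n\<close> and all claims reduce to properties of \<open>\<phi>\<close>.
  A permutation fixing \<open>xbar\<close> is an isometry mapping \<open>M \<inter> ball xbar \<delta>\<close> onto itself,
  hence preserves \<open>T\<close>, and uniqueness of the decomposition into tangent and normal part
  makes \<open>\<phi>\<close> equivariant. For a transposition of two indices in one orbit of \<open>\<sigma>\<close> this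
  is a reflection, which forces the corresponding coordinates of \<open>\<phi>\<close> to agree; so \<open>\<phi>\<close>
  takes values in \<open>Nred\<close>, which all these permutations fix pointwise. The derivative of
  \<open>\<phi>bar\<close> at \<open>xbar\<close> is \<open>t + n \<mapsto> \<phi>' t - n\<close>, onto \<open>Nred\<close> because \<open>\<phi>'\<close> maps
  \<open>T\<close> into the closed subspace \<open>Nred\<close>.\<close>

section \<open>Permutation action\<close>

lemma pact_nth [simp]: "pact \<sigma> x $ i = x $ inv \<sigma> i"
  by (simp add: pact_def)

lemma linear_pact: "linear (pact \<sigma>)"
  by (rule linearI) (simp_all add: vec_eq_iff)

lemma inner_pact:
  assumes "\<sigma> permutes UNIV"
  shows "pact \<sigma> x \<bullet> pact \<sigma> y = x \<bullet> y"
proof -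
  have "pact \<sigma> x \<bullet> pact \<sigma> y = (\<Sum>i\<in>UNIV. x $ inv \<sigma> i * y $ inv \<sigma> i)"
    by (simp add: inner_vec_def)
  also have "\<dots> = (\<Sum>i\<in>UNIV. x $ i * y $ i)"
    using sum.permute[OF permutes_inv[OF assms], of "\<lambda>i. x $ i * y $ i"] by (simp add: o_def)
  finally show ?thesis
    by (simp add: inner_vec_def)
qed

lemma pact_pact_inv:
  assumes "\<sigma> permutes UNIV"
  shows "pact \<sigma> (pact (inv \<sigma>) x) = x"
  by (simp add: vec_eq_iff permutes_inv_inv[OF assms] permutes_inverses(1)[OF assms])

lemma pact_inv_fixed:
  assumes "\<sigma> permutes UNIV" "pact \<sigma> x = x"
  shows "pact (inv \<sigma>) x = x"
  using assms by (metis permutes_inv permutes_inv_inv pact_pact_inv)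

lemma pact_fixes_stratum_span:
  assumes "p \<in> stratum \<sigma>" "pact \<sigma>' p = p" "z \<in> stratum_span \<sigma>"
  shows "pact \<sigma>' z = z"
proof -
  have "z $ inv \<sigma>' k = z $ k" for k
  proof -
    have "p $ inv \<sigma>' k = p $ k"
      using arg_cong[OF assms(2), of "\<lambda>x. x $ k"] by simp
    then show ?thesis
      using assms(1,3) unfolding stratum_def stratum_span_def by blast
  qed
  then show ?thesis
    by (simp add: vec_eq_iff)
qed

text \<open>As \<open>w \<bullet> w = 2\<close>, this is the reflection in the hyperplane orthogonal to \<open>w\<close>.\<close>
lemma pact_transpose:
  assumes "i \<noteq> j"
  defines "w \<equiv> axis i 1 - axis j 1"
  shows "pact (Transposition.transpose i j) v = v - (v \<bullet> w) *\<^sub>R w"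
proof -
  have "v \<bullet> w = v $ i - v $ j"
    by (simp add: w_def inner_diff_right inner_axis)
  then show ?thesis
    using assms(1) by (simp add: vec_eq_iff w_def Transposition.transpose_def axis_def)
qed

section \<open>Orthogonal projections onto affine subspaces\<close>

lemma orth_proj_aff:
  fixes V :: "'a::real_inner set"
  assumes "subspace V" "v \<in> V" "w \<in> V\<^sup>\<bottom>"
  shows "orth_proj (aff p V) (p + (v + w)) = p + v"
  unfolding orth_proj_def
proof (rule the_equality)
  have w_orth: "w \<bullet> u = 0" if "u \<in> V" for u
    using assms(3) that by (simp add: orthogonal_comp_def orthogonal_def inner_commute)
  then show "p + v \<in> aff p V \<and> (\<forall>a\<in>aff p V. \<forall>b\<in>aff p V. (p + (v + w) - (p + v)) \<bullet> (a - b) = 0)"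
    using assms(1,2) by (auto simp: aff_def subspace_diff)
  fix q
  assume q: "q \<in> aff p V \<and> (\<forall>a\<in>aff p V. \<forall>b\<in>aff p V. (p + (v + w) - q) \<bullet> (a - b) = 0)"
  then obtain u where u: "u \<in> V" "q = p + u"
    by (auto simp: aff_def)
  have "p + v \<in> aff p V"
    using assms(2) by (auto simp: aff_def)
  then have "(p + (v + w) - q) \<bullet> ((p + v) - q) = 0"
    using q by blast
  then have "(v - u + w) \<bullet> (v - u) = 0"
    using u by (simp add: algebra_simps)
  moreover have "w \<bullet> (v - u) = 0"
    using assms(1,2) u(1) by (intro w_orth subspace_diff)
  ultimately have "(v - u) \<bullet> (v - u) = 0"
    by (simp add: inner_add_left)
  then show "q = p + v"
    using u by simp
qed

lemma orthogonal_comp_decomp: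
  fixes V :: "'a::euclidean_space set"
  assumes "subspace V"
  obtains v w where "v \<in> V" "w \<in> V\<^sup>\<bottom>" "z = v + w"
proof -
  obtain v w where v: "v \<in> span V" and w: "\<And>u. u \<in> span V \<Longrightarrow> orthogonal w u"
    and z: "z = v + w"
    using orthogonal_subspace_decomp_exists[of V z] by blast
  have span: "span V = V"
    using assms by (simp add: span_eq_iff)
  have "w \<in> V\<^sup>\<bottom>"
    using w unfolding span orthogonal_comp_def by (auto simp: orthogonal_commute)
  then show ?thesis
    using that v z span by blast
qed

lemma linear_orth_proj_aff:
  fixes V :: "'a::euclidean_space set"
  assumes "subspace V"
  shows "linear (\<lambda>z. orth_proj (aff p V) (p + z) - p)" (is "linear ?P")
proof -
  have P: "?P (v + w) = v" if "v \<in> V" "w \<in> V\<^sup>\<bottom>" for v w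
    using orth_proj_aff[OF assms that] by simp
  show ?thesis
  proof (rule linearI)
    fix x y
    obtain v1 w1 where 1: "v1 \<in> V" "w1 \<in> V\<^sup>\<bottom>" "x = v1 + w1"
      using orthogonal_comp_decomp[OF assms] by blast
    obtain v2 w2 where 2: "v2 \<in> V" "w2 \<in> V\<^sup>\<bottom>" "y = v2 + w2"
      using orthogonal_comp_decomp[OF assms] by blast
    have "?P (x + y) = ?P ((v1 + v2) + (w1 + w2))"
      using 1 2 by (simp add: algebra_simps)
    also have "\<dots> = v1 + v2"
      using 1 2 assms by (intro P) (simp_all add: subspace_add subspace_orthogonal_comp)
    also have "\<dots> = ?P x + ?P y"
      using 1 2 P by simp
    finally show "?P (x + y) = ?P x + ?P y" .
  next
    fix c :: real and x
    obtain v w where vw: "v \<in> V" "w \<in> V\<^sup>\<bottom>" "x = v + w"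
      using orthogonal_comp_decomp[OF assms] by blast
    have "?P (c *\<^sub>R x) = ?P (c *\<^sub>R v + c *\<^sub>R w)"
      using vw by (simp add: scaleR_add_right)
    also have "\<dots> = c *\<^sub>R v"
      using vw assms by (intro P) (simp_all add: subspace_scale subspace_orthogonal_comp)
    also have "\<dots> = c *\<^sub>R ?P x"
      using vw P by simp
    finally show "?P (c *\<^sub>R x) = c *\<^sub>R ?P x" .
  qed
qed

lemma has_derivative_orth_proj_aff:
  fixes V :: "'a::euclidean_space set"
  assumes "subspace V"
  shows "(orth_proj (aff p V) has_derivative (\<lambda>z. orth_proj (aff p V) (p + z) - p)) (at x within S)"
proof -
  let ?P = "\<lambda>z. orth_proj (aff p V) (p + z) - p"
  have P: "bounded_linear ?P"
    using linear_orth_proj_aff[OF assms] linear_conv_bounded_linear by blast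
  have "((\<lambda>y. y - p) has_derivative (\<lambda>y. y)) (at x within S)"
    by (rule has_derivative_diff[OF has_derivative_ident has_derivative_const, simplified])
  then have "((\<lambda>y. ?P (y - p) + p) has_derivative ?P) (at x within S)"
    by (rule has_derivative_add_const[OF bounded_linear.has_derivative[OF P]])
  then show ?thesis
    by simp
qed

lemma subspace_direct_sum: "subspace V \<Longrightarrow> subspace W \<Longrightarrow> subspace (direct_sum V W)"
  unfolding direct_sum_def by (rule subspace_sums)

section \<open>Derivatives along lines\<close>

lemma small_scaleR_bound:
  fixes z :: "'a::real_normed_vector"
  assumes "r > 0"
  obtains e where "e > 0" "\<And>s. \<bar>s\<bar> < e \<Longrightarrow> norm (s *\<^sub>R z) < r"
proof
  show "r / (norm z + 1) > 0"
    using assms by (simp add: add_nonneg_pos)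
  fix s :: real
  assume s: "\<bar>s\<bar> < r / (norm z + 1)"
  have "norm (s *\<^sub>R z) = \<bar>s\<bar> * norm z"
    by simp
  also have "\<dots> \<le> r / (norm z + 1) * norm z"
    using s by (intro mult_right_mono) auto
  also have "\<dots> < r"
    using assms add_nonneg_pos[of "norm z" 1] by (simp add: pos_divide_less_eq algebra_simps)
  finally show "norm (s *\<^sub>R z) < r" .
qed

lemma line_in_aff_ball:
  fixes V :: "'a::real_normed_vector set"
  assumes "subspace V" "z \<in> V" "r > 0"
  obtains e where "e > 0" "\<And>s. \<bar>s\<bar> < e \<Longrightarrow> p + s *\<^sub>R z \<in> aff p V \<inter> ball p r"
proof -
  obtain e where e: "e > 0" "\<And>s. \<bar>s\<bar> < e \<Longrightarrow> norm (s *\<^sub>R z) < r"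
    using small_scaleR_bound[OF assms(3)] by blast
  have "p + s *\<^sub>R z \<in> aff p V \<inter> ball p r" if "\<bar>s\<bar> < e" for s
    using e(2)[OF that] assms(1,2) by (auto simp: aff_def dist_norm subspace_scale)
  with e(1) that show ?thesis
    by blast
qed

lemma has_vector_derivative_in_subspace:
  fixes f :: "real \<Rightarrow> 'a::euclidean_space"
  assumes "(f has_vector_derivative v) (at 0)" "subspace C"
    and "\<forall>\<^sub>F s in at 0. f s - f 0 \<in> C"
  shows "v \<in> C"
proof -
  have "((\<lambda>s. norm ((f s - f 0) - (s - 0) *\<^sub>R v) / norm (s - 0)) \<longlongrightarrow> 0) (at 0)"
    using assms(1) unfolding has_vector_derivative_def has_derivative_iff_norm by blast
  then have quot: "((\<lambda>s. norm ((f s - f 0) - s *\<^sub>R v) / norm s) \<longlongrightarrow> 0) (at 0)"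
    by simp
  have eq: "\<forall>\<^sub>F s in at 0. norm ((f s - f 0) - s *\<^sub>R v) / norm s = norm ((f s - f 0) /\<^sub>R s - v)"
    unfolding eventually_at_filter
  proof (rule always_eventually, intro allI impI)
    fix s :: real
    assume "s \<noteq> 0"
    then have "(f s - f 0) /\<^sub>R s - v = (1 / s) *\<^sub>R ((f s - f 0) - s *\<^sub>R v)"
      by (simp add: algebra_simps divide_inverse_commute)
    then show "norm ((f s - f 0) - s *\<^sub>R v) / norm s = norm ((f s - f 0) /\<^sub>R s - v)"
      by simp
  qed
  then have "((\<lambda>s. norm ((f s - f 0) /\<^sub>R s - v)) \<longlongrightarrow> 0) (at 0)"
    using tendsto_cong[OF eq] quot by simp
  then have "((\<lambda>s. (f s - f 0) /\<^sub>R s - v) \<longlongrightarrow> 0) (at 0)"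
    using tendsto_norm_zero_iff by blast
  then have lim: "((\<lambda>s. (f s - f 0) /\<^sub>R s) \<longlongrightarrow> v) (at 0)"
    using Lim_null by blast
  have "\<forall>\<^sub>F s in at 0. (f s - f 0) /\<^sub>R s \<in> C"
    using assms(3) by (rule eventually_mono) (simp add: assms(2) subspace_scale)
  then show ?thesis
    by (rule Lim_in_closed_set[OF closed_subspace[OF assms(2)] _ _ lim]) simp
qed

lemma has_vector_derivative_along_line:
  fixes f :: "'a::real_normed_vector \<Rightarrow> 'b::real_normed_vector"
  assumes "(f has_derivative F) (at p within S)" "e > 0"
    and "\<And>s. \<bar>s\<bar> < e \<Longrightarrow> p + s *\<^sub>R z \<in> S"
  shows "((\<lambda>s. f (p + s *\<^sub>R z)) has_vector_derivative F z) (at 0)"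
proof -
  let ?h = "\<lambda>s::real. p + s *\<^sub>R z"
  have "(?h has_derivative (\<lambda>s. s *\<^sub>R z)) (at 0 within {-e<..<e})"
    by (auto intro!: derivative_eq_intros)
  moreover have "?h ` {-e<..<e} \<subseteq> S"
    using assms(3) by auto
  then have "(f has_derivative F) (at (?h 0) within ?h ` {-e<..<e})"
    using has_derivative_subset[OF assms(1)] by simp
  ultimately have "((\<lambda>s. f (?h s)) has_derivative (\<lambda>s. F (s *\<^sub>R z))) (at 0 within {-e<..<e})"
    by (rule has_derivative_in_compose)
  then have "((\<lambda>s. f (?h s)) has_derivative (\<lambda>s. F (s *\<^sub>R z))) (at 0)"
    using at_within_open[of 0 "{-e<..<e}"] assms(2) by simp
  moreover have "F (s *\<^sub>R z) = s *\<^sub>R F z" for s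
    using assms(1) has_derivative_bounded_linear linear_cmul bounded_linear.linear by blast
  ultimately show ?thesis
    by (simp add: has_vector_derivative_def)
qed

lemma has_derivative_unique_along_line:
  assumes "(f has_derivative F) (at p within S)" "(f has_derivative G) (at p within S)"
    and "e > 0" "\<And>s. \<bar>s\<bar> < e \<Longrightarrow> p + s *\<^sub>R z \<in> S"
  shows "F z = G z"
  using vector_derivative_unique_at[OF has_vector_derivative_along_line[OF assms(1,3,4)]
      has_vector_derivative_along_line[OF assms(2,3,4)]] .

section \<open>Tangent spaces\<close>

lemma tangent_vector_in_chart_subspace:
  fixes \<psi> :: "(real,'n::finite) vec \<Rightarrow> 'a::euclidean_space"
  assumes "open U" "p \<in> U" "p \<in> M" "(\<psi> has_derivative A) (at p)"
    and "subspace L" "\<psi> ` (M \<inter> U) \<subseteq> L" "v \<in> tangent_space M p"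
  shows "A v \<in> L"
proof -
  obtain \<gamma> e where \<gamma>: "e > 0" "\<gamma> 0 = p" "\<forall>t\<in>{-e<..<e}. \<gamma> t \<in> M"
    "(\<gamma> has_vector_derivative v) (at 0)"
    using assms(7) unfolding tangent_space_def by blast
  have "isCont \<gamma> 0"
    using \<gamma>(4) by (rule has_vector_derivative_continuous)
  then have "(\<gamma> \<longlongrightarrow> p) (at 0)"
    using \<gamma>(2) by (simp add: isCont_def)
  then have "\<forall>\<^sub>F t in at 0. \<gamma> t \<in> U"
    using assms(1,2) by (rule topological_tendstoD)
  moreover have "\<forall>\<^sub>F t in at (0::real). t \<in> {-e<..<e}"
    using eventually_at_in_open'[of "{-e<..<e}" 0] \<gamma>(1) by simp
  ultimately have ev: "\<forall>\<^sub>F t in at 0. \<psi> (\<gamma> t) - \<psi> (\<gamma> 0) \<in> L"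
  proof eventually_elim
    case (elim t)
    then have "\<psi> (\<gamma> t) \<in> L" "\<psi> (\<gamma> 0) \<in> L"
      using \<gamma>(2,3) assms(2,3,6) by blast+
    then show ?case
      by (rule subspace_diff[OF assms(5)])
  qed
  have "(\<gamma> has_derivative (\<lambda>t. t *\<^sub>R v)) (at 0)"
    using \<gamma>(4) by (simp add: has_vector_derivative_def)
  moreover have "(\<psi> has_derivative A) (at (\<gamma> 0))"
    using assms(4) \<gamma>(2) by simp
  ultimately have "((\<psi> \<circ> \<gamma>) has_derivative (A \<circ> (\<lambda>t. t *\<^sub>R v))) (at 0)"
    by (rule diff_chain_at)
  moreover have "A (t *\<^sub>R v) = t *\<^sub>R A v" for t
    using linear_cmul[OF has_derivative_linear[OF assms(4)]] .
  ultimately have "((\<lambda>t. \<psi> (\<gamma> t)) has_vector_derivative A v) (at 0)"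
    by (simp add: has_vector_derivative_def o_def)
  from has_vector_derivative_in_subspace[OF this assms(5)] ev show ?thesis
    by simp
qed

lemma chart_inverse_derivative_tangent:
  assumes "open W" "q \<in> W" "(g has_derivative B) (at q)"
    and "subspace L" "q \<in> L" "l \<in> L" "g ` (L \<inter> W) \<subseteq> M"
  shows "B l \<in> tangent_space M (g q)"
proof -
  obtain r where r: "r > 0" "ball q r \<subseteq> W"
    using assms(1,2) open_contains_ball by blast
  obtain e where e: "e > 0" "\<And>s. \<bar>s\<bar> < e \<Longrightarrow> norm (s *\<^sub>R l) < r"
    using small_scaleR_bound[OF r(1)] by blast
  have "q + s *\<^sub>R l \<in> L \<inter> W" if "\<bar>s\<bar> < e" for s
  proof
    show "q + s *\<^sub>R l \<in> L"
      using assms(4-6) by (simp add: subspace_add subspace_scale)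
    show "q + s *\<^sub>R l \<in> W"
      using e(2)[OF that] r(2) by (auto simp: dist_norm)
  qed
  then have "\<forall>s\<in>{-e<..<e}. g (q + s *\<^sub>R l) \<in> M"
    using assms(7) by (auto simp: abs_less_iff image_subset_iff)
  moreover have "((\<lambda>s. g (q + s *\<^sub>R l)) has_vector_derivative B l) (at 0)"
    by (rule has_vector_derivative_along_line[OF assms(3) e(1), of l]) simp
  ultimately show ?thesis
    unfolding tangent_space_def
    by (intro CollectI exI[of _ "\<lambda>s. g (q + s *\<^sub>R l)"] exI[of _ e] conjI) (simp_all add: e(1))
qed

lemma subspace_tangent_space:
  fixes M :: "(real,'n::finite) vec set"
  assumes "C2_submanifold M d" "p \<in> M"
  shows "subspace (tangent_space M p)"
proof -
  obtain U W L and \<psi> :: "(real,'n) vec \<Rightarrow> (real,'n) vec" where chart: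
    "open U" "p \<in> U" "open W" "bij_betw \<psi> U W" "C2_on U \<psi>" "C2_on W (the_inv_into U \<psi>)"
    "subspace L" "\<psi> ` (M \<inter> U) = L \<inter> W"
    using assms unfolding C2_submanifold_def by metis
  define g where "g = the_inv_into U \<psi>"
  have g\<psi>: "g (\<psi> x) = x" if "x \<in> U" for x
    using chart(4) that by (simp add: g_def bij_betw_def the_inv_into_f_f)
  have q: "\<psi> p \<in> W" "\<psi> p \<in> L"
    using chart(2,4,8) assms(2) by (auto simp: bij_betw_def)
  obtain A where A: "(\<psi> has_derivative A) (at p)"
    using chart(1,2,5) at_within_open unfolding C2_on_def by metis
  obtain B where B: "(g has_derivative B) (at (\<psi> p))"
    using chart(3,6) q(1) at_within_open unfolding C2_on_def g_def by metis
  have "((g \<circ> \<psi>) has_derivative (B \<circ> A)) (at p)"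
    using A B by (rule diff_chain_at)
  then have "(id has_derivative (B \<circ> A)) (at p)"
    by (rule has_derivative_transform_within_open[OF _ chart(1,2)]) (simp add: g\<psi>)
  then have BA: "B \<circ> A = id"
    using has_derivative_id has_derivative_unique by blast
  have "g ` (L \<inter> W) \<subseteq> M"
    using chart(8) g\<psi> by (force simp: image_iff)
  then have "B ` L \<subseteq> tangent_space M p"
    using chart_inverse_derivative_tangent[OF chart(3) q(1) B chart(7) q(2)] g\<psi>[OF chart(2)] by auto
  moreover have "tangent_space M p \<subseteq> B ` L"
  proof
    fix v
    assume "v \<in> tangent_space M p"
    then have "A v \<in> L"
      using tangent_vector_in_chart_subspace[OF chart(1,2) assms(2) A chart(7)] chart(8) by blast
    then show "v \<in> B ` L"
      using pointfree_idE[OF BA, of v] by (metis image_eqI)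
  qed
  ultimately have "tangent_space M p = B ` L"
    by blast
  moreover have "linear B"
    using B has_derivative_linear by blast
  ultimately show ?thesis
    using chart(7) linear_subspace_image by metis
qed

lemma tangent_space_linear_image:
  fixes M :: "(real,'n::finite) vec set"
  assumes "linear f" "f p = p" "\<delta> > 0" "f ` (M \<inter> ball p \<delta>) \<subseteq> M"
    and "v \<in> tangent_space M p"
  shows "f v \<in> tangent_space M p"
proof -
  obtain \<gamma> e where \<gamma>: "e > 0" "\<gamma> 0 = p" "\<forall>t\<in>{-e<..<e}. \<gamma> t \<in> M"
    "(\<gamma> has_vector_derivative v) (at 0)"
    using assms(5) unfolding tangent_space_def by blast
  have "isCont \<gamma> 0"
    using \<gamma>(4) by (rule has_vector_derivative_continuous)
  then obtain e' where e': "e' > 0" "\<forall>t. dist t 0 < e' \<longrightarrow> dist (\<gamma> t) (\<gamma> 0) < \<delta>"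
    using assms(3) unfolding continuous_at_eps_delta by blast
  define e2 where "e2 = min e e'"
  have "f (\<gamma> t) \<in> M" if "t \<in> {-e2<..<e2}" for t
  proof -
    have "dist (\<gamma> t) p < \<delta>"
      using that \<gamma>(2) e'(2) by (auto simp: e2_def dist_real_def abs_less_iff)
    then have "\<gamma> t \<in> M \<inter> ball p \<delta>"
      using that \<gamma>(3) by (auto simp: e2_def dist_commute)
    then show ?thesis
      using assms(4) by blast
  qed
  moreover have "bounded_linear f"
    using assms(1) by (simp add: linear_conv_bounded_linear)
  then have "((\<lambda>t. f (\<gamma> t)) has_vector_derivative f v) (at 0)"
    using \<gamma>(4) by (rule bounded_linear.has_vector_derivative)
  moreover have "e2 > 0" "f (\<gamma> 0) = p"
    using \<gamma>(1,2) e'(1) assms(2) by (simp_all add: e2_def)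
  ultimately show ?thesis
    unfolding tangent_space_def
    by (intro CollectI exI[of _ "\<lambda>t. f (\<gamma> t)"] exI[of _ e2] conjI) simp_all
qed

lemma normal_space_eq_orthogonal_comp: "normal_space M p = (tangent_space M p)\<^sup>\<bottom>"
  by (auto simp: normal_space_def orthogonal_comp_def orthogonal_def inner_commute)

section \<open>Graphs with normal values and their symmetries\<close>

locale normal_graph =
  fixes M T :: "'a::euclidean_space set" and p :: 'a and \<delta> :: real and \<phi> :: "'a \<Rightarrow> 'a"
  assumes subspace_T: "subspace T"
    and \<delta>_pos: "0 < \<delta>"
    and normal_values: "\<And>y. y \<in> aff p T \<inter> ball p \<delta> \<Longrightarrow> \<phi> y \<in> T\<^sup>\<bottom>"
    and graph_eq: "M \<inter> ball p \<delta> = {y + \<phi> y | y. y \<in> aff p T \<inter> ball p \<delta>}"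
begin

lemma graph_point: "y \<in> aff p T \<inter> ball p \<delta> \<Longrightarrow> y + \<phi> y \<in> M \<inter> ball p \<delta>"
  using graph_eq by blast

lemma graph_point_unique:
  assumes "y \<in> aff p T" "u \<in> T\<^sup>\<bottom>" "y + u \<in> M \<inter> ball p \<delta>"
  shows "y \<in> aff p T \<inter> ball p \<delta> \<and> \<phi> y = u"
proof -
  obtain z where z: "z \<in> aff p T \<inter> ball p \<delta>" "y + u = z + \<phi> z"
    using assms(3) graph_eq by blast
  obtain t t' where t: "t \<in> T" "y = p + t" and t': "t' \<in> T" "z = p + t'"
    using assms(1) z(1) by (auto simp: aff_def)
  have "t + u = t' + \<phi> z"
    using z(2) t t' by (simp add: add.assoc)
  then have "t = t' \<and> u = \<phi> z"
    using t(1) t'(1) assms(2) normal_values[OF z(1)]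
    by (intro orthogonal_subspace_decomp_unique[of t u t' "\<phi> z" T "T\<^sup>\<bottom>"])
      (auto simp: orthogonal_comp_def intro: span_base)
  then show ?thesis
    using z(1) t t' by simp
qed

definition local_symmetry :: "('a \<Rightarrow> 'a) \<Rightarrow> bool" where
  "local_symmetry f \<longleftrightarrow> linear f \<and> (\<forall>x y. f x \<bullet> f y = x \<bullet> y) \<and> f p = p \<and> f ` T = T \<and>
     f ` (M \<inter> ball p \<delta>) \<subseteq> M \<inter> ball p \<delta>"

lemma local_symmetry_orthogonal_comp:
  assumes "local_symmetry f" "w \<in> T\<^sup>\<bottom>"
  shows "f w \<in> T\<^sup>\<bottom>"
  unfolding orthogonal_comp_def
proof (intro CollectI ballI)
  fix v
  assume "v \<in> T"
  then obtain u where "u \<in> T" "v = f u"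
    using assms(1) unfolding local_symmetry_def by blast
  then show "orthogonal v (f w)"
    using assms unfolding local_symmetry_def orthogonal_comp_def orthogonal_def by simp
qed

lemma local_symmetry_base:
  assumes "local_symmetry f" "y \<in> aff p T \<inter> ball p \<delta>"
  shows "f y \<in> aff p T \<inter> ball p \<delta>"
proof -
  have f: "linear f" "\<And>x. f x \<bullet> f x = x \<bullet> x" "f p = p" "f ` T = T"
    using assms(1) unfolding local_symmetry_def by simp_all
  obtain t where t: "t \<in> T" "y = p + t"
    using assms(2) by (auto simp: aff_def)
  have "f y = p + f t"
    using t(2) f(1,3) by (simp add: linear_add)
  then have "f y \<in> aff p T"
    using t(1) f(4) by (auto simp: aff_def)
  moreover have "dist p (f y) = dist p y"
    using \<open>f y = p + f t\<close> t(2) f(2) by (simp add: dist_norm norm_eq_sqrt_inner)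
  ultimately show ?thesis
    using assms(2) by simp
qed

lemma graph_equivariant:
  assumes "local_symmetry f" "y \<in> aff p T \<inter> ball p \<delta>"
  shows "\<phi> (f y) = f (\<phi> y)"
proof -
  have "f (y + \<phi> y) \<in> M \<inter> ball p \<delta>"
    using assms graph_point unfolding local_symmetry_def by blast
  moreover have "f (y + \<phi> y) = f y + f (\<phi> y)"
    using assms(1) unfolding local_symmetry_def by (simp add: linear_add)
  moreover have "f y \<in> aff p T" "f (\<phi> y) \<in> T\<^sup>\<bottom>"
    using local_symmetry_base local_symmetry_orthogonal_comp assms normal_values by blast+
  ultimately show ?thesis
    using graph_point_unique by metis
qed

text \<open>If the axis \<open>w\<close> is not in \<open>T\<close>, invariance of \<open>T\<close> forces \<open>T \<bottom> w\<close>; then the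
  reflection fixes \<open>y\<close>, and equivariance puts \<open>\<phi> y\<close> into the mirror.\<close>
lemma graph_orthogonal_reflection_axis:
  assumes "local_symmetry (\<lambda>v. v - (v \<bullet> w) *\<^sub>R w)" "y \<in> aff p T \<inter> ball p \<delta>"
  shows "\<phi> y \<bullet> w = 0"
proof (cases "w \<in> T")
  case True
  then show ?thesis
    using normal_values[OF assms(2)] by (simp add: orthogonal_comp_def orthogonal_def inner_commute)
next
  case False
  let ?R = "\<lambda>v. v - (v \<bullet> w) *\<^sub>R w"
  have R: "?R ` T = T" "?R p = p"
    using assms(1) unfolding local_symmetry_def by simp_all
  have Tw: "v \<bullet> w = 0" if "v \<in> T" for v
  proof (rule ccontr)
    assume vw: "v \<bullet> w \<noteq> 0"
    have "v - ?R v \<in> T"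
      using R(1) that subspace_T by (blast intro: subspace_diff)
    then have "(1 / (v \<bullet> w)) *\<^sub>R (v - ?R v) \<in> T"
      using subspace_T by (rule subspace_scale[rotated])
    then show False
      using vw False by simp
  qed
  obtain t where t: "t \<in> T" "y = p + t"
    using assms(2) by (auto simp: aff_def)
  have Ry: "?R y = y"
    using R(2) t Tw[OF t(1)] by (simp add: inner_add_left algebra_simps)
  have "\<phi> y = ?R (\<phi> y)"
    using graph_equivariant[OF assms] unfolding Ry .
  then have "(\<phi> y \<bullet> w) *\<^sub>R w = 0"
    by (simp add: algebra_simps)
  moreover have "w \<noteq> 0"
    using False subspace_0[OF subspace_T] by blast
  ultimately show ?thesis
    by simp
qed

end

locale reduced_graph = normal_graph +
  fixes Nr :: "'a set"
  assumes subspace_Nr: "subspace Nr"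
    and Nr_normal: "Nr \<subseteq> T\<^sup>\<bottom>"
    and values_in_Nr: "\<And>y. y \<in> aff p T \<inter> ball p \<delta> \<Longrightarrow> \<phi> y \<in> Nr"
begin

definition reduced_equation :: "'a \<Rightarrow> 'a" where
  "reduced_equation x = p + \<phi> (orth_proj (aff p T) x) - orth_proj (aff p Nr) x"

lemma orth_proj_tangent_normal_sum:
  assumes "t \<in> T" "n \<in> Nr"
  shows "orth_proj (aff p T) (p + (t + n)) = p + t"
    and "orth_proj (aff p Nr) (p + (t + n)) = p + n"
proof -
  show "orth_proj (aff p T) (p + (t + n)) = p + t"
    using orth_proj_aff[OF subspace_T assms(1)] assms(2) Nr_normal by blast
  have "t \<in> Nr\<^sup>\<bottom>"
    using assms(1) Nr_normal by (auto simp: orthogonal_comp_def orthogonal_commute)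
  then show "orth_proj (aff p Nr) (p + (t + n)) = p + n"
    using orth_proj_aff[OF subspace_Nr assms(2), of t p] by (simp only: add.commute[of t n])
qed

lemma reduced_equation_sum:
  assumes "t \<in> T" "n \<in> Nr"
  shows "reduced_equation (p + (t + n)) = \<phi> (p + t) - n"
  using orth_proj_tangent_normal_sum[OF assms] by (simp add: reduced_equation_def)

lemma reduced_domainE:
  assumes "x \<in> aff p (direct_sum T Nr) \<inter> ball p \<delta>"
  obtains t n where "t \<in> T" "n \<in> Nr" "x = p + (t + n)" "p + t \<in> aff p T \<inter> ball p \<delta>"
proof -
  obtain t n where tn: "t \<in> T" "n \<in> Nr" "x = p + (t + n)"
    using assms unfolding aff_def direct_sum_def by blast
  have "orthogonal t n"
    using tn(1,2) Nr_normal by (auto simp: orthogonal_comp_def)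
  then have "(norm t)\<^sup>2 \<le> (norm (t + n))\<^sup>2"
    by (simp add: norm_add_Pythagorean)
  then have "norm t \<le> norm (t + n)"
    by (rule power2_le_imp_le) simp
  also have "\<dots> = dist x p"
    by (simp add: tn(3) dist_norm)
  also have "\<dots> < \<delta>"
    using assms by (simp add: dist_commute)
  finally have "p + t \<in> aff p T \<inter> ball p \<delta>"
    using tn(1) by (auto simp: aff_def dist_norm)
  with tn that show ?thesis
    by blast
qed

lemma reduced_equation_in_Nr:
  assumes "x \<in> aff p (direct_sum T Nr) \<inter> ball p \<delta>"
  shows "orth_proj (aff p T) x \<in> aff p T \<inter> ball p \<delta>" "reduced_equation x \<in> Nr"
proof -
  obtain t n where tn: "t \<in> T" "n \<in> Nr" "x = p + (t + n)" "p + t \<in> aff p T \<inter> ball p \<delta>"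
    using assms by (rule reduced_domainE)
  then show "orth_proj (aff p T) x \<in> aff p T \<inter> ball p \<delta>"
    using orth_proj_tangent_normal_sum by simp
  show "reduced_equation x \<in> Nr"
    using tn reduced_equation_sum values_in_Nr subspace_Nr by (simp add: subspace_diff)
qed

lemma reduced_equation_eq_0_iff:
  assumes "x \<in> aff p (direct_sum T Nr) \<inter> ball p \<delta>"
  shows "reduced_equation x = 0 \<longleftrightarrow> x \<in> M \<inter> ball p \<delta>"
proof -
  obtain t n where tn: "t \<in> T" "n \<in> Nr" "x = p + (t + n)" "p + t \<in> aff p T \<inter> ball p \<delta>"
    using assms by (rule reduced_domainE)
  have x: "x = (p + t) + n"
    using tn(3) by (simp add: add.assoc)
  show ?thesis
  proof
    assume "reduced_equation x = 0"
    then have "n = \<phi> (p + t)"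
      using reduced_equation_sum[OF tn(1,2)] tn(3) by simp
    then show "x \<in> M \<inter> ball p \<delta>"
      using graph_point[OF tn(4)] x by simp
  next
    assume "x \<in> M \<inter> ball p \<delta>"
    then have "\<phi> (p + t) = n"
      using graph_point_unique[of "p + t" n] tn(2,4) Nr_normal x by blast
    then show "reduced_equation x = 0"
      using reduced_equation_sum[OF tn(1,2)] tn(3) by simp
  qed
qed

lemma reduced_equation_invariant:
  assumes "local_symmetry f" "\<And>n. n \<in> Nr \<Longrightarrow> f n = n"
    and "x \<in> aff p (direct_sum T Nr) \<inter> ball p \<delta>"
  shows "reduced_equation (f x) = reduced_equation x"
proof -
  obtain t n where tn: "t \<in> T" "n \<in> Nr" "x = p + (t + n)" "p + t \<in> aff p T \<inter> ball p \<delta>"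
    using assms(3) by (rule reduced_domainE)
  have f: "linear f" "f p = p" "f ` T = T"
    using assms(1) unfolding local_symmetry_def by simp_all
  have "f x = p + (f t + n)"
    using tn(2,3) f(1,2) assms(2) by (simp add: linear_add)
  moreover have "f (p + t) = p + f t"
    using f(1,2) by (simp add: linear_add)
  moreover have "f t \<in> T"
    using tn(1) f(3) by blast
  ultimately have "reduced_equation (f x) = f (\<phi> (p + t)) - n"
    using reduced_equation_sum[OF _ tn(2)] graph_equivariant[OF assms(1) tn(4)] by simp
  also have "\<dots> = reduced_equation x"
    using assms(2) values_in_Nr[OF tn(4)] reduced_equation_sum[OF tn(1,2)] tn(3) by simp
  finally show ?thesis .
qed

lemma derivative_in_Nr:
  assumes "(\<phi> has_derivative \<phi>') (at p within aff p T \<inter> ball p \<delta>)" "t \<in> T"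
  shows "\<phi>' t \<in> Nr"
proof -
  obtain e where e: "e > 0" and line: "\<And>s. \<bar>s\<bar> < e \<Longrightarrow> p + s *\<^sub>R t \<in> aff p T \<inter> ball p \<delta>"
    using line_in_aff_ball[OF subspace_T assms(2) \<delta>_pos] by blast
  have "((\<lambda>s. \<phi> (p + s *\<^sub>R t)) has_vector_derivative \<phi>' t) (at 0)"
    using assms(1) e line by (rule has_vector_derivative_along_line)
  moreover have "\<forall>\<^sub>F s in at (0::real). s \<in> {-e<..<e}"
    using eventually_at_in_open'[of "{-e<..<e}" 0] e by simp
  then have "\<forall>\<^sub>F s in at 0. \<phi> (p + s *\<^sub>R t) - \<phi> (p + 0 *\<^sub>R t) \<in> Nr"
  proof (rule eventually_mono)
    fix s :: real
    assume "s \<in> {-e<..<e}"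
    then have "\<phi> (p + s *\<^sub>R t) \<in> Nr" "\<phi> (p + 0 *\<^sub>R t) \<in> Nr"
      using line[of s] line[of 0] values_in_Nr e by (auto simp: abs_less_iff)
    then show "\<phi> (p + s *\<^sub>R t) - \<phi> (p + 0 *\<^sub>R t) \<in> Nr"
      by (rule subspace_diff[OF subspace_Nr])
  qed
  ultimately show ?thesis
    using has_vector_derivative_in_subspace[OF _ subspace_Nr] by blast
qed

lemma has_derivative_reduced_equation:
  assumes "(\<phi> has_derivative \<phi>') (at p within aff p T \<inter> ball p \<delta>)"
    and "S \<subseteq> aff p (direct_sum T Nr) \<inter> ball p \<delta>"
  shows "(reduced_equation has_derivative
           (\<lambda>z. \<phi>' (orth_proj (aff p T) (p + z) - p) - (orth_proj (aff p Nr) (p + z) - p)))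
         (at p within S)"
proof -
  have "orth_proj (aff p T) p = p"
    using orth_proj_tangent_normal_sum(1)[OF subspace_0[OF subspace_T] subspace_0[OF subspace_Nr]]
    by simp
  moreover have "orth_proj (aff p T) ` S \<subseteq> aff p T \<inter> ball p \<delta>"
    using reduced_equation_in_Nr(1) assms(2) by blast
  ultimately have "(\<phi> has_derivative \<phi>') (at (orth_proj (aff p T) p) within orth_proj (aff p T) ` S)"
    using has_derivative_subset[OF assms(1)] by simp
  with has_derivative_orth_proj_aff[OF subspace_T]
  have "((\<lambda>x. \<phi> (orth_proj (aff p T) x)) has_derivative
          (\<lambda>z. \<phi>' (orth_proj (aff p T) (p + z) - p))) (at p within S)"
    by (rule has_derivative_in_compose)
  from has_derivative_diff[OF has_derivative_add[OF has_derivative_const this]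
      has_derivative_orth_proj_aff[OF subspace_Nr]]
  show ?thesis
    by (simp add: reduced_equation_def[abs_def])
qed

lemma reduced_equation_derivative_image:
  assumes "(\<phi> has_derivative \<phi>') (at p within aff p T \<inter> ball p \<delta>)"
    and "0 < r" "aff p (direct_sum T Nr) \<inter> ball p r \<subseteq> S"
    and "S \<subseteq> aff p (direct_sum T Nr) \<inter> ball p \<delta>"
    and "(reduced_equation has_derivative L) (at p within S)"
  shows "L ` direct_sum T Nr = Nr"
proof -
  define L0 where
    "L0 z = \<phi>' (orth_proj (aff p T) (p + z) - p) - (orth_proj (aff p Nr) (p + z) - p)" for z
  have L0: "(reduced_equation has_derivative L0) (at p within S)"
    unfolding L0_def using assms(1,4) by (rule has_derivative_reduced_equation)
  have L0_sum: "L0 (t + n) = \<phi>' t - n" if "t \<in> T" "n \<in> Nr" for t n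
    using orth_proj_tangent_normal_sum[OF that] by (simp add: L0_def)
  have "L z = L0 z" if z: "z \<in> direct_sum T Nr" for z
  proof -
    obtain e where "e > 0" "\<And>s. \<bar>s\<bar> < e \<Longrightarrow> p + s *\<^sub>R z \<in> aff p (direct_sum T Nr) \<inter> ball p r"
      using line_in_aff_ball[OF subspace_direct_sum[OF subspace_T subspace_Nr] z assms(2)] by blast
    then show ?thesis
      using has_derivative_unique_along_line[OF assms(5) L0] assms(3) by blast
  qed
  then have "L ` direct_sum T Nr = L0 ` direct_sum T Nr"
    by (rule image_cong[OF refl])
  also have "\<dots> = Nr"
  proof
    show "L0 ` direct_sum T Nr \<subseteq> Nr"
      using L0_sum derivative_in_Nr[OF assms(1)] subspace_Nr
      by (auto simp: direct_sum_def subspace_diff)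
    show "Nr \<subseteq> L0 ` direct_sum T Nr"
    proof
      fix m
      assume m: "m \<in> Nr"
      then have "- m \<in> Nr"
        using subspace_Nr by (simp add: subspace_neg)
      then have "L0 (0 + - m) = m"
        using L0_sum[OF subspace_0[OF subspace_T]] linear_0[OF has_derivative_linear[OF assms(1)]]
        by simp
      moreover have "0 + - m \<in> direct_sum T Nr"
        unfolding direct_sum_def using subspace_0[OF subspace_T] \<open>- m \<in> Nr\<close> by blast
      ultimately show "m \<in> L0 ` direct_sum T Nr"
        by (metis image_eqI)
    qed
  qed
  finally show ?thesis .
qed

end

section \<open>Permutation symmetries of the local graph\<close>

lemma L2_set_coordinates_le_dist:
  fixes x y :: "(real,'n::finite) vec"
  shows "L2_set (\<lambda>i. x $ i - y $ i) A \<le> dist x y"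
proof -
  have "L2_set (\<lambda>i. x $ i - y $ i) A = sqrt (\<Sum>i\<in>A. (x $ i - y $ i)\<^sup>2)"
    by (simp add: L2_set_def)
  also have "\<dots> \<le> sqrt (\<Sum>i\<in>UNIV. (x $ i - y $ i)\<^sup>2)"
    by (intro real_sqrt_le_mono sum_mono2) auto
  also have "\<dots> = dist x y"
    by (simp add: dist_norm norm_vec_def L2_set_def)
  finally show ?thesis .
qed

lemma subspace_stratum_span: "subspace (stratum_span \<sigma>)"
  by (auto simp: subspace_def stratum_span_def)

lemma ball_subset_L2_box:
  fixes p :: "(real,'n::finite) vec"
  shows "ball p (min r1 r2) \<subseteq>
    {x. L2_set (\<lambda>i. x $ i - p $ i) A < r1 \<and> L2_set (\<lambda>i. x $ i - p $ i) B < r2}"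
proof
  fix x
  assume "x \<in> ball p (min r1 r2)"
  then have "dist x p < r1" "dist x p < r2"
    by (simp_all add: dist_commute)
  then show "x \<in> {x. L2_set (\<lambda>i. x $ i - p $ i) A < r1 \<and> L2_set (\<lambda>i. x $ i - p $ i) B < r2}"
    using order_le_less_trans[OF L2_set_coordinates_le_dist] by blast
qed

lemma local_symmetry_pact:
  fixes M :: "(real,'n::{finite,linorder}) vec set"
  assumes "normal_graph M (tangent_space M p) p \<delta> \<phi>"
    and "strongly_locally_symmetric (M \<inter> ball p \<delta>)" "p \<in> M"
    and "\<sigma> permutes UNIV" "pact \<sigma> p = p"
  shows "normal_graph.local_symmetry M (tangent_space M p) p \<delta> (pact \<sigma>)"
proof -
  interpret normal_graph M "tangent_space M p" p \<delta> \<phi>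
    by fact
  have sym: "pact \<rho> ` (M \<inter> ball p \<delta>) = M \<inter> ball p \<delta>" if "\<rho> permutes UNIV" "pact \<rho> p = p" for \<rho>
  proof -
    have "p \<in> M \<inter> ball p \<delta>"
      using assms(3) \<delta>_pos by simp
    then show ?thesis
      using assms(2) that unfolding strongly_locally_symmetric_def by blast
  qed
  have T: "pact \<rho> ` tangent_space M p \<subseteq> tangent_space M p"
    if "\<rho> permutes UNIV" "pact \<rho> p = p" for \<rho>
    using tangent_space_linear_image[OF linear_pact that(2) \<delta>_pos] sym[OF that] by blast
  have "tangent_space M p \<subseteq> pact \<sigma> ` tangent_space M p"
  proof
    fix v
    assume "v \<in> tangent_space M p"
    then have "pact (inv \<sigma>) v \<in> tangent_space M p"
      using T[OF permutes_inv[OF assms(4)] pact_inv_fixed[OF assms(4,5)]] by blast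
    then show "v \<in> pact \<sigma> ` tangent_space M p"
      using pact_pact_inv[OF assms(4)] by (metis image_eqI)
  qed
  then show ?thesis
    unfolding local_symmetry_def
    using linear_pact inner_pact[OF assms(4)] assms(5) T[OF assms(4,5)] sym[OF assms(4,5)] by blast
qed

lemma graph_values_in_stratum_span:
  fixes M :: "(real,'n::{finite,linorder}) vec set"
  assumes "normal_graph M (tangent_space M p) p \<delta> \<phi>"
    and "strongly_locally_symmetric (M \<inter> ball p \<delta>)" "p \<in> M" "p \<in> stratum \<sigma>"
    and "y \<in> aff p (tangent_space M p) \<inter> ball p \<delta>"
  shows "\<phi> y \<in> stratum_span \<sigma>"
  unfolding stratum_span_def
proof (intro CollectI allI impI)
  interpret normal_graph M "tangent_space M p" p \<delta> \<phi>
    by fact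
  fix i j
  assume ij: "same_orbit \<sigma> i j"
  show "\<phi> y $ i = \<phi> y $ j"
  proof (cases "i = j")
    case False
    define w :: "(real,'n) vec" where "w = axis i 1 - axis j 1"
    have "p $ i = p $ j"
      using assms(4) ij unfolding stratum_def by blast
    then have "pact (Transposition.transpose i j) p = p"
      by (simp add: vec_eq_iff Transposition.transpose_def)
    then have "local_symmetry (pact (Transposition.transpose i j))"
      using local_symmetry_pact[OF assms(1-3) permutes_swap_id] by simp
    moreover have "pact (Transposition.transpose i j) = (\<lambda>v. v - (v \<bullet> w) *\<^sub>R w)"
      using pact_transpose[OF False] by (simp add: fun_eq_iff w_def)
    ultimately have "\<phi> y \<bullet> w = 0"
      using graph_orthogonal_reflection_axis[OF _ assms(5)] by simp
    then show ?thesis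
      by (simp add: w_def inner_diff_right inner_axis)
  qed simp
qed

lemma reduced_graph_of_symmetric_graph:
  fixes M :: "(real,'n::{finite,linorder}) vec set"
  assumes "C2_submanifold M d" "p \<in> M" "p \<in> stratum \<sigma>" "0 < \<delta>"
    and "strongly_locally_symmetric (M \<inter> ball p \<delta>)"
    and "\<forall>y\<in>aff p (tangent_space M p) \<inter> ball p \<delta>. \<phi> y \<in> normal_space M p"
    and "M \<inter> ball p \<delta> = {y + \<phi> y | y. y \<in> aff p (tangent_space M p) \<inter> ball p \<delta>}"
  shows "reduced_graph M (tangent_space M p) p \<delta> \<phi> (normal_space M p \<inter> stratum_span \<sigma>)"
proof -
  have graph: "normal_graph M (tangent_space M p) p \<delta> \<phi>"
    using subspace_tangent_space[OF assms(1,2)] assms(4,6,7)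
    by unfold_locales (simp_all add: normal_space_eq_orthogonal_comp)
  have "\<phi> y \<in> stratum_span \<sigma>" if "y \<in> aff p (tangent_space M p) \<inter> ball p \<delta>" for y
    using graph_values_in_stratum_span[OF graph assms(5,2,3) that] .
  then show ?thesis
    using assms(6) subspace_inter[OF subspace_orthogonal_comp subspace_stratum_span]
    by (intro reduced_graph.intro[OF graph] reduced_graph_axioms.intro)
      (auto simp: normal_space_eq_orthogonal_comp)
qed

theorem theorem4p12:
  fixes M :: "((real,'n::{finite,linorder}) vec) set"
    and d :: nat
    and \<sigma>s \<sigma> :: "'n \<Rightarrow> 'n"
    and xbar :: "(real,'n) vec"
    and \<delta> \<delta>1 \<delta>2 :: real
    and \<phi> \<phi>bar :: "(real,'n) vec \<Rightarrow> (real,'n) vec"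
    and T N Nred \<B> D :: "((real,'n) vec) set"
  assumes M_manifold: "C2_submanifold M d" and M_conn: "connected M"
    and M_locsym: "locally_symmetric M"
    and char: "characteristic_perm M \<sigma>s"
    and \<sigma>_perm: "\<sigma> permutes UNIV"
    and xbar_in: "xbar \<in> M \<inter> stratum \<sigma>"
    and \<delta>_pos: "\<delta> > 0"
    and strata: "\<forall>\<sigma>'. \<sigma>' permutes UNIV \<and> ball xbar \<delta> \<inter> stratum \<sigma>' \<noteq> {} \<longrightarrow> refines \<sigma>' \<sigma>"
    and strong: "strongly_locally_symmetric (M \<inter> ball xbar \<delta>)"
    and T_def: "T = tangent_space M xbar"
    and N_def: "N = normal_space M xbar"
    and diffeo: "diffeo_onto_image (M \<inter> ball xbar \<delta>) (orth_proj (aff xbar T))"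
    and \<phi>_N: "\<forall>y\<in>aff xbar T \<inter> ball xbar \<delta>. \<phi> y \<in> N"
    and \<phi>_C2: "C2_on (aff xbar T \<inter> ball xbar \<delta>) \<phi>"
    and \<phi>_graph: "M \<inter> ball xbar \<delta> = {y + \<phi> y | y. y \<in> aff xbar T \<inter> ball xbar \<delta>}"
    and Nred_def: "Nred = N \<inter> stratum_span \<sigma>"
    and \<delta>12: "\<delta>1 > 0" "\<delta>2 > 0"
    and B_def: "\<B> = {x. L2_set (\<lambda>i. x $ i - xbar $ i) {i. \<sigma>s i = i} < \<delta>1 \<and>
                         L2_set (\<lambda>i. x $ i - xbar $ i) {i. \<sigma>s i \<noteq> i} < \<delta>2}"
    and B_sub: "\<B> \<subseteq> ball xbar \<delta>"
    and D_def: "D = aff xbar (direct_sum T Nred) \<inter> \<B>"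
    and \<phi>bar_def: "\<forall>x. \<phi>bar x = xbar + \<phi> (orth_proj (aff xbar T) x) - orth_proj (aff xbar Nred) x"
  shows "(\<forall>x\<in>D. orth_proj (aff xbar T) x \<in> aff xbar T \<inter> ball xbar \<delta> \<and> \<phi>bar x \<in> Nred)
       \<and> (\<forall>x\<in>D. \<forall>\<sigma>'. \<sigma>' permutes UNIV \<and> pact \<sigma>' xbar = xbar \<longrightarrow> \<phi>bar (pact \<sigma>' x) = \<phi>bar x)
       \<and> (\<forall>x\<in>D. \<phi>bar x = 0 \<longleftrightarrow> x \<in> M \<inter> ball xbar \<delta>)
       \<and> (\<exists>L. (\<phi>bar has_derivative L) (at xbar within D))
       \<and> (\<forall>L. (\<phi>bar has_derivative L) (at xbar within D) \<longrightarrow> L ` (direct_sum T Nred) = Nred)"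
proof -
  have xbar: "xbar \<in> M" "xbar \<in> stratum \<sigma>"
    using xbar_in by auto
  interpret reduced_graph M T xbar \<delta> \<phi> Nred
    using reduced_graph_of_symmetric_graph[OF M_manifold xbar \<delta>_pos strong] \<phi>_N \<phi>_graph
    by (simp add: T_def N_def Nred_def)
  have sym: "local_symmetry (pact \<sigma>')" "\<And>n. n \<in> Nred \<Longrightarrow> pact \<sigma>' n = n"
    if "\<sigma>' permutes UNIV" "pact \<sigma>' xbar = xbar" for \<sigma>'
    using local_symmetry_pact[OF _ strong xbar(1) that] normal_graph_axioms
      pact_fixes_stratum_span[OF xbar(2) that(2)]
    by (auto simp: T_def Nred_def)
  have D: "D \<subseteq> aff xbar (direct_sum T Nred) \<inter> ball xbar \<delta>"
    "aff xbar (direct_sum T Nred) \<inter> ball xbar (min \<delta>1 \<delta>2) \<subseteq> D"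
    using D_def B_sub B_def ball_subset_L2_box by blast+
  obtain \<phi>' where \<phi>': "(\<phi> has_derivative \<phi>') (at xbar within aff xbar T \<inter> ball xbar \<delta>)"
    using \<phi>_C2 \<delta>_pos subspace_0[OF subspace_T] unfolding C2_on_def by (force simp: aff_def)
  have D_in: "x \<in> aff xbar (direct_sum T Nred) \<inter> ball xbar \<delta>" if "x \<in> D" for x
    using D(1) that by blast
  have "\<phi>bar = reduced_equation"
    using \<phi>bar_def by (simp add: fun_eq_iff reduced_equation_def)
  moreover have "\<forall>x\<in>D. \<forall>\<sigma>'. \<sigma>' permutes UNIV \<and> pact \<sigma>' xbar = xbar \<longrightarrow>
      reduced_equation (pact \<sigma>' x) = reduced_equation x"
    using reduced_equation_invariant[OF sym D_in] by blast
  moreover have "(reduced_equation has_derivative L) (at xbar within D) \<Longrightarrow>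
      L ` direct_sum T Nred = Nred" for L
    using reduced_equation_derivative_image[OF \<phi>' _ D(2,1)] \<delta>12 by simp
  ultimately show ?thesis
    using reduced_equation_in_Nr[OF D_in] reduced_equation_eq_0_iff[OF D_in]
      has_derivative_reduced_equation[OF \<phi>' D(1)] by blast
qed

end
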